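(* Let $\rho,\sigma$ be pure $n$-qubit states, and let $\epsilon_1>0$, $\epsilon_2>0$, $\delta>0$. Let $\tilde p_{\mathrm{mix}}$ be a distribution on $\{0,1\}^{2n}$ with $\|p_{\mathrm{mix}}-\tilde p_{\mathrm{mix}}\|_{\mathrm{TV}}<\Delta$. Let $f=\frac12(1+\mathrm{tr}(\rho\sigma))$ and let $f(N_1,N_2)=\frac{1}{N_1}\sum_{i=1}^{N_1}G(\hat\alpha_\rho(x_i),\hat\alpha_\sigma(x_i))$ be the symmetric-protocol estimator. Then $$|f(N_1,N_2)-f|\le 2\epsilon_1+2\sqrt{\epsilon_2}+\frac{F_\rho(\epsilon_2)}{2}+\frac{F_\sigma(\epsilon_2)}{2}+2\Delta$$ with probability at least $1-\delta$, provided that $N_1\ge(2\epsilon_1^2)^{-1}\ln(8/\delta)$ and $N_2\ge(2/\epsilon_2^2)\ln(8N_1/\delta)$.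
   Context: Pauli strings $P_x$, $x\in\{0,1\}^{2n}$, are the $n$-qubit Hermitian Pauli strings; $\alpha_\rho(x)=\mathrm{tr}(\rho P_x)$. The Pauli distribution of a pure state is $p_\rho(x)=\alpha_\rho(x)^2/2^n$, and $p_{\mathrm{mix}}=\frac12(p_\rho+p_\sigma)$. Symmetric protocol: draw $x_1,\dots,x_{N_1}$ i.i.d. from $\tilde p_{\mathrm{mix}}$; for each $i$, measure the observable $P_{x_i}$ $N_2$ times on fresh copies of $\rho$ and $N_2$ times on fresh copies of $\sigma$, and let $\hat\alpha_\rho(x_i),\hat\alpha_\sigma(x_i)$ be the empirical means of the $\pm1$ outcomes. $G(u,v)=\frac12\frac{(u+v)^2}{u^2+v^2}$ on $[-1,1]^2\setminus\{(0,0)\}$, with $G(0,0)$ set to an arbitrary fixed value in $[0,1]$. The CDF of a state is $F_\rho(\tau)=\sum_{x:\,\alpha_\rho(x)^2<\tau}p_\rho(x)$. $\|\cdot\|_{\mathrm{TV}}$ is total variation distance. *)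

theory Defs
  imports "HOL-Probability.Probability"
begin

text \<open>Computational basis of n qubits: bit strings of length n (True = |1>).\<close>
definition basis :: "nat \<Rightarrow> bool list set" where
  "basis n = {z. length z = n}"

text \<open>Pauli labels x in {0,1}^{2n}, written as a pair (a,b) of n-bit strings;
  on qubit j the factor is I (a_j=b_j=0), X (a_j=1,b_j=0), Z (a_j=0,b_j=1), Y (a_j=b_j=1).\<close>
definition pauli_labels :: "nat \<Rightarrow> (bool list \<times> bool list) set" where
  "pauli_labels n = {(a, b). length a = n \<and> length b = n}"

text \<open>Matrix entry <w|sigma_(a,b)|z> of the single-qubit Hermitian Pauli matrices.\<close>
definition pauli1 :: "bool \<Rightarrow> bool \<Rightarrow> bool \<Rightarrow> bool \<Rightarrow> complex" where
  "pauli1 a b w z =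
     (if \<not> a \<and> \<not> b then (if w = z then 1 else 0)
      else if a \<and> \<not> b then (if w \<noteq> z then 1 else 0)
      else if \<not> a \<and> b then (if w = z then (if z then -1 else 1) else 0)
      else (if w \<noteq> z then (if w then \<i> else - \<i>) else 0))"

definition pauli_entry :: "nat \<Rightarrow> bool list \<times> bool list \<Rightarrow> bool list \<Rightarrow> bool list \<Rightarrow> complex" where
  "pauli_entry n x w z = (\<Prod>j<n. pauli1 (fst x ! j) (snd x ! j) (w ! j) (z ! j))"

definition pure_state :: "nat \<Rightarrow> (bool list \<Rightarrow> complex) \<Rightarrow> bool" where
  "pure_state n \<psi> \<longleftrightarrow> (\<Sum>z\<in>basis n. (cmod (\<psi> z))\<^sup>2) = 1"

text \<open>alpha_rho(x) = tr(rho P_x) = <psi|P_x|psi> (a real number since P_x is Hermitian).\<close>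
definition alpha :: "nat \<Rightarrow> (bool list \<Rightarrow> complex) \<Rightarrow> bool list \<times> bool list \<Rightarrow> real" where
  "alpha n \<psi> x = Re (\<Sum>w\<in>basis n. \<Sum>z\<in>basis n. cnj (\<psi> w) * pauli_entry n x w z * \<psi> z)"

text \<open>tr(rho sigma) = |<psi|phi>|^2 for pure states.\<close>
definition overlap :: "nat \<Rightarrow> (bool list \<Rightarrow> complex) \<Rightarrow> (bool list \<Rightarrow> complex) \<Rightarrow> real" where
  "overlap n \<psi> \<phi> = (cmod (\<Sum>z\<in>basis n. cnj (\<psi> z) * \<phi> z))\<^sup>2"

definition pauli_dist :: "nat \<Rightarrow> (bool list \<Rightarrow> complex) \<Rightarrow> bool list \<times> bool list \<Rightarrow> real" where
  "pauli_dist n \<psi> x = (alpha n \<psi> x)\<^sup>2 / 2 ^ n"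

definition p_mix :: "nat \<Rightarrow> (bool list \<Rightarrow> complex) \<Rightarrow> (bool list \<Rightarrow> complex) \<Rightarrow> bool list \<times> bool list \<Rightarrow> real" where
  "p_mix n \<psi> \<phi> x = (pauli_dist n \<psi> x + pauli_dist n \<phi> x) / 2"

definition tv_dist :: "nat \<Rightarrow> (bool list \<times> bool list \<Rightarrow> real) \<Rightarrow> (bool list \<times> bool list) pmf \<Rightarrow> real" where
  "tv_dist n p q = (\<Sum>x\<in>pauli_labels n. \<bar>p x - pmf q x\<bar>) / 2"

definition cdf :: "nat \<Rightarrow> (bool list \<Rightarrow> complex) \<Rightarrow> real \<Rightarrow> real" where
  "cdf n \<psi> \<tau> = (\<Sum>x\<in>{x\<in>pauli_labels n. (alpha n \<psi> x)\<^sup>2 < \<tau>}. pauli_dist n \<psi> x)"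

definition G :: "real \<Rightarrow> real \<Rightarrow> real \<Rightarrow> real" where
  "G g0 u v = (if u = 0 \<and> v = 0 then g0 else (1/2) * (u + v)\<^sup>2 / (u\<^sup>2 + v\<^sup>2))"

text \<open>Outcome of measuring P_x on psi: True encodes +1, which has probability (1+alpha)/2.\<close>
definition measure_outcome :: "nat \<Rightarrow> (bool list \<Rightarrow> complex) \<Rightarrow> bool list \<times> bool list \<Rightarrow> bool pmf" where
  "measure_outcome n \<psi> x = bernoulli_pmf ((1 + alpha n \<psi> x) / 2)"

text \<open>Joint distribution of the data of the symmetric protocol: for each i < N1 a label x_i
  drawn from ptilde, and N2 independent outcomes on fresh copies of rho and of sigma.\<close>
definition protocol_pmf ::
  "nat \<Rightarrow> (bool list \<Rightarrow> complex) \<Rightarrow> (bool list \<Rightarrow> complex) \<Rightarrow> (bool list \<times> bool list) pmf \<Rightarrow> nat \<Rightarrow> nat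
   \<Rightarrow> (nat \<Rightarrow> (bool list \<times> bool list) \<times> (nat \<Rightarrow> bool) \<times> (nat \<Rightarrow> bool)) pmf" where
  "protocol_pmf n \<psi> \<phi> pt N1 N2 =
     Pi_pmf {..<N1} undefined (\<lambda>_.
       do { x \<leftarrow> pt;
            r \<leftarrow> Pi_pmf {..<N2} False (\<lambda>_. measure_outcome n \<psi> x);
            s \<leftarrow> Pi_pmf {..<N2} False (\<lambda>_. measure_outcome n \<phi> x);
            return_pmf (x, r, s) })"

definition emp_mean :: "nat \<Rightarrow> (nat \<Rightarrow> bool) \<Rightarrow> real" where
  "emp_mean N2 r = (\<Sum>j<N2. if r j then 1 else -1) / real N2"

definition estimator ::
  "real \<Rightarrow> nat \<Rightarrow> nat \<Rightarrow> (nat \<Rightarrow> (bool list \<times> bool list) \<times> (nat \<Rightarrow> bool) \<times> (nat \<Rightarrow> bool)) \<Rightarrow> real" where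
  "estimator g0 N1 N2 \<omega> =
     (\<Sum>i<N1. G g0 (emp_mean N2 (fst (snd (\<omega> i)))) (emp_mean N2 (snd (snd (\<omega> i))))) / real N1"

end

theory Submission
  imports Defs
begin

text \<open>
  Since the Pauli strings are an orthogonal basis of the matrices,
  \<open>\<Sum>\<^sub>x \<alpha>\<^sub>\<rho>(x) \<alpha>\<^sub>\<sigma>(x) = 2\<^sup>n tr(\<rho>\<sigma>)\<close>; hence
  \<open>p\<^sub>m\<^sub>i\<^sub>x(x) G(\<alpha>\<^sub>\<rho>(x), \<alpha>\<^sub>\<sigma>(x)) = (\<alpha>\<^sub>\<rho>(x) + \<alpha>\<^sub>\<sigma>(x))\<^sup>2 / (4 \<cdot> 2\<^sup>n)\<close> sums to \<open>f\<close>, and the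
  estimator is an empirical mean of \<open>G\<close> over labels drawn from (nearly) \<open>p\<^sub>m\<^sub>i\<^sub>x\<close>.
  By Hoeffding's inequality and union bounds, with probability at least \<open>1 - \<delta>\<close> all \<open>2 N\<^sub>1\<close>
  amplitude estimates are \<open>\<epsilon>\<^sub>2\<close>-accurate, and the empirical means over the sampled labels of
  \<open>G(\<alpha>\<^sub>\<rho>, \<alpha>\<^sub>\<sigma>)\<close> and of the indicator of the weak labels (both amplitudes squared below
  \<open>\<epsilon>\<^sub>2\<close>) are \<open>\<epsilon>\<^sub>1\<close>-close to their means under \<open>pt\<close>. On that event \<open>G\<close> moves by at most
  \<open>2 \<surd>\<epsilon>\<^sub>2\<close> on the other labels and by at most \<open>1\<close> on the weak ones, whose \<open>p\<^sub>m\<^sub>i\<^sub>x\<close>-mass is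
  at most \<open>(F\<^sub>\<rho>(\<epsilon>\<^sub>2) + F\<^sub>\<sigma>(\<epsilon>\<^sub>2)) / 2\<close>; replacing \<open>pt\<close> by \<open>p\<^sub>m\<^sub>i\<^sub>x\<close> costs \<open>\<Delta>\<close> in each of the
  two means.
\<close>

section \<open>Pauli strings\<close>

lemma finite_basis [simp]: "finite (basis n)"
  using finite_lists_length_eq[of "UNIV :: bool set" n] by (simp add: basis_def)

lemma pauli_labels_eq: "pauli_labels n = basis n \<times> basis n"
  by (auto simp: pauli_labels_def basis_def)

lemma finite_pauli_labels [simp]: "finite (pauli_labels n)"
  by (simp add: pauli_labels_eq)

lemma basis_eq_iff_nth: "w \<in> basis n \<Longrightarrow> w' \<in> basis n \<Longrightarrow> w = w' \<longleftrightarrow> (\<forall>j<n. w ! j = w' ! j)"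
  by (auto simp: basis_def list_eq_iff_nth_eq)

lemma sum_basis_prod:
  fixes f :: "nat \<Rightarrow> bool \<Rightarrow> 'a::comm_semiring_1"
  shows "(\<Sum>xs\<in>basis n. \<Prod>j<n. f j (xs ! j)) = (\<Prod>j<n. f j True + f j False)"
proof (induction n arbitrary: f)
  case 0
  then show ?case by (simp add: basis_def)
next
  case (Suc n)
  have basis_Suc: "basis (Suc n) = (\<lambda>(b, xs). b # xs) ` (UNIV \<times> basis n)"
    by (auto simp: basis_def image_iff length_Suc_conv)
  have "(\<Sum>xs\<in>basis (Suc n). \<Prod>j<Suc n. f j (xs ! j))
      = (\<Sum>b\<in>UNIV. \<Sum>xs\<in>basis n. f 0 b * (\<Prod>j<n. f (Suc j) (xs ! j)))"
    unfolding basis_Suc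
    by (subst sum.reindex) (auto simp: inj_on_def sum.cartesian_product prod.lessThan_Suc_shift
        case_prod_unfold simp del: prod.lessThan_Suc)
  also have "\<dots> = (\<Prod>j<Suc n. f j True + f j False)"
    using Suc.IH[of "\<lambda>j. f (Suc j)"]
    by (simp add: sum_distrib_left[symmetric] UNIV_bool prod.lessThan_Suc_shift distrib_right add.commute
        del: prod.lessThan_Suc)
  finally show ?case .
qed

lemma prod_if_const_zero:
  "(\<Prod>j<n. if P j then c else 0) = (if \<forall>j<n. P j then c ^ n else (0 :: 'a::comm_semiring_1))"
  by (induction n) (auto simp: less_Suc_eq mult.commute)

lemma sum_delta_diagonal:
  fixes f :: "'a \<Rightarrow> 'a \<Rightarrow> 'b \<Rightarrow> 'b \<Rightarrow> 'c::semiring_0"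
  assumes "finite A" "finite B"
  shows "(\<Sum>w\<in>A. \<Sum>w'\<in>A. \<Sum>z\<in>B. \<Sum>z'\<in>B. f w w' z z' * (if w = w' \<and> z = z' then K else 0))
         = (\<Sum>w\<in>A. \<Sum>z\<in>B. f w w z z * K)"
proof -
  have "(\<Sum>z\<in>B. \<Sum>z'\<in>B. f w w' z z' * (if w = w' \<and> z = z' then K else 0))
      = (if w = w' then \<Sum>z\<in>B. f w w z z * K else 0)" for w w'
    using assms(2) by (auto simp: if_distrib[of "\<lambda>t. _ * t"] cong: if_cong)
  then show ?thesis
    using assms(1) by simp
qed

lemma cnj_pauli1: "cnj (pauli1 a b w z) = pauli1 a b z w"
  by (cases a; cases b; cases w; cases z) (simp_all add: pauli1_def)

lemma cnj_pauli_entry: "cnj (pauli_entry n x w z) = pauli_entry n x z w"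
  by (simp add: pauli_entry_def cnj_pauli1)

lemma pauli1_completeness:
  "(pauli1 True True w z * cnj (pauli1 True True w' z') + pauli1 True False w z * cnj (pauli1 True False w' z'))
   + (pauli1 False True w z * cnj (pauli1 False True w' z') + pauli1 False False w z * cnj (pauli1 False False w' z'))
   = (if w = w' \<and> z = z' then 2 else 0)"
  by (cases w; cases z; cases w'; cases z') (simp_all add: pauli1_def)

lemma pauli1_unitary:
  "pauli1 a b True z * cnj (pauli1 a b True z') + pauli1 a b False z * cnj (pauli1 a b False z')
   = (if z = z' then 1 else 0)"
  by (cases a; cases b; cases z; cases z') (simp_all add: pauli1_def)

lemma pauli_entry_completeness:
  assumes "w \<in> basis n" "z \<in> basis n" "w' \<in> basis n" "z' \<in> basis n"
  shows "(\<Sum>x\<in>pauli_labels n. pauli_entry n x w z * cnj (pauli_entry n x w' z'))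
         = (if w = w' \<and> z = z' then 2 ^ n else 0)"
proof -
  define h where "h j a b = pauli1 a b (w ! j) (z ! j) * cnj (pauli1 a b (w' ! j) (z' ! j))" for j a b
  have "(\<Sum>x\<in>pauli_labels n. pauli_entry n x w z * cnj (pauli_entry n x w' z'))
      = (\<Sum>a\<in>basis n. \<Sum>b\<in>basis n. \<Prod>j<n. h j (a ! j) (b ! j))"
    by (simp add: pauli_labels_eq sum.cartesian_product case_prod_unfold pauli_entry_def h_def
        prod.distrib[symmetric])
  also have "\<dots> = (\<Sum>a\<in>basis n. \<Prod>j<n. h j (a ! j) True + h j (a ! j) False)"
    by (intro sum.cong refl sum_basis_prod)
  also have "\<dots> = (\<Prod>j<n. (h j True True + h j True False) + (h j False True + h j False False))"
    by (rule sum_basis_prod)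
  also have "\<dots> = (\<Prod>j<n. if w ! j = w' ! j \<and> z ! j = z' ! j then 2 else 0)"
    unfolding h_def by (simp only: pauli1_completeness)
  also have "\<dots> = (if w = w' \<and> z = z' then 2 ^ n else 0)"
    using assms by (simp add: prod_if_const_zero basis_eq_iff_nth all_conj_distrib)
  finally show ?thesis .
qed

lemma pauli_entry_unitary:
  assumes "z \<in> basis n" "z' \<in> basis n"
  shows "(\<Sum>w\<in>basis n. pauli_entry n x w z * cnj (pauli_entry n x w z')) = (if z = z' then 1 else 0)"
proof -
  define h where
    "h j b = pauli1 (fst x ! j) (snd x ! j) b (z ! j) * cnj (pauli1 (fst x ! j) (snd x ! j) b (z' ! j))" for j b
  have "(\<Sum>w\<in>basis n. pauli_entry n x w z * cnj (pauli_entry n x w z')) = (\<Sum>w\<in>basis n. \<Prod>j<n. h j (w ! j))"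
    by (simp add: pauli_entry_def h_def prod.distrib[symmetric])
  also have "\<dots> = (\<Prod>j<n. if z ! j = z' ! j then 1 else 0)"
    unfolding sum_basis_prod unfolding h_def by (simp only: pauli1_unitary)
  also have "\<dots> = (if z = z' then 1 else 0)"
    using assms by (simp add: prod_if_const_zero basis_eq_iff_nth)
  finally show ?thesis .
qed

definition pauli_expval :: "nat \<Rightarrow> (bool list \<Rightarrow> complex) \<Rightarrow> bool list \<times> bool list \<Rightarrow> complex" where
  "pauli_expval n \<psi> x = (\<Sum>w\<in>basis n. \<Sum>z\<in>basis n. cnj (\<psi> w) * pauli_entry n x w z * \<psi> z)"

lemma pauli_expval_real: "pauli_expval n \<psi> x \<in> \<real>"
proof -
  have "cnj (pauli_expval n \<psi> x) = (\<Sum>w\<in>basis n. \<Sum>z\<in>basis n. \<psi> w * pauli_entry n x z w * cnj (\<psi> z))"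
    by (simp add: pauli_expval_def cnj_sum cnj_pauli_entry)
  also have "\<dots> = pauli_expval n \<psi> x"
    by (subst sum.swap) (simp add: pauli_expval_def mult_ac)
  finally show ?thesis
    by (metis Reals_cnj_iff)
qed

lemma of_real_alpha: "complex_of_real (alpha n \<psi> x) = pauli_expval n \<psi> x"
  using pauli_expval_real by (simp add: alpha_def pauli_expval_def[symmetric] of_real_Re)

lemma pure_state_sum_mult_cnj:
  assumes "pure_state n \<psi>"
  shows "(\<Sum>z\<in>basis n. \<psi> z * cnj (\<psi> z)) = 1"
proof -
  have "(\<Sum>z\<in>basis n. \<psi> z * cnj (\<psi> z)) = complex_of_real (\<Sum>z\<in>basis n. (cmod (\<psi> z))\<^sup>2)"
    by (simp only: of_real_sum complex_norm_square)
  also have "\<dots> = 1"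
    by (simp only: assms[unfolded pure_state_def] of_real_1)
  finally show ?thesis .
qed

lemma sum_alpha_mult_alpha:
  "(\<Sum>x\<in>pauli_labels n. alpha n \<psi> x * alpha n \<phi> x) = 2 ^ n * overlap n \<psi> \<phi>"
proof -
  let ?B = "basis n"
  define c where "c w w' z z' = cnj (\<psi> w) * \<phi> w' * \<psi> z * cnj (\<phi> z')" for w w' z z'
  have expand: "pauli_expval n \<psi> x * cnj (pauli_expval n \<phi> x) =
      (\<Sum>w\<in>?B. \<Sum>w'\<in>?B. \<Sum>z\<in>?B. \<Sum>z'\<in>?B. c w w' z z' * (pauli_entry n x w z * cnj (pauli_entry n x w' z')))"
    for x
    by (simp add: pauli_expval_def cnj_sum sum_product c_def mult_ac)
  have "complex_of_real (\<Sum>x\<in>pauli_labels n. alpha n \<psi> x * alpha n \<phi> x)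
      = (\<Sum>x\<in>pauli_labels n. pauli_expval n \<psi> x * cnj (pauli_expval n \<phi> x))"
    by (simp flip: of_real_alpha)
  also have "\<dots> = (\<Sum>w\<in>?B. \<Sum>w'\<in>?B. \<Sum>z\<in>?B. \<Sum>z'\<in>?B.
      c w w' z z' * (\<Sum>x\<in>pauli_labels n. pauli_entry n x w z * cnj (pauli_entry n x w' z')))"
    by (simp only: expand sum.swap[where A = "pauli_labels n"] sum_distrib_left)
  also have "\<dots> = (\<Sum>w\<in>?B. \<Sum>w'\<in>?B. \<Sum>z\<in>?B. \<Sum>z'\<in>?B. c w w' z z' * (if w = w' \<and> z = z' then 2 ^ n else 0))"
    by (intro sum.cong refl) (simp add: pauli_entry_completeness)
  also have "\<dots> = (\<Sum>w\<in>?B. \<Sum>z\<in>?B. c w w z z * 2 ^ n)"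
    by (simp only: sum_delta_diagonal finite_basis)
  also have "\<dots> = 2 ^ n * ((\<Sum>w\<in>?B. cnj (\<psi> w) * \<phi> w) * cnj (\<Sum>z\<in>?B. cnj (\<psi> z) * \<phi> z))"
    by (simp add: cnj_sum sum_product sum_distrib_left c_def mult_ac) (rule sum.swap)
  also have "\<dots> = complex_of_real (2 ^ n * overlap n \<psi> \<phi>)"
    unfolding overlap_def of_real_mult complex_norm_square by simp
  finally show ?thesis
    by (simp only: of_real_eq_iff)
qed

lemma sum_alpha_squared:
  assumes "pure_state n \<psi>"
  shows "(\<Sum>x\<in>pauli_labels n. (alpha n \<psi> x)\<^sup>2) = 2 ^ n"
proof -
  have "overlap n \<psi> \<psi> = 1"
    using pure_state_sum_mult_cnj[OF assms] by (simp add: overlap_def mult.commute)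
  then show ?thesis
    using sum_alpha_mult_alpha[of n \<psi> \<psi>] by (simp add: power2_eq_square)
qed

lemma norm_pauli_apply:
  assumes "pure_state n \<psi>"
  shows "(\<Sum>w\<in>basis n. (cmod (\<Sum>z\<in>basis n. pauli_entry n x w z * \<psi> z))\<^sup>2) = 1"
proof -
  let ?B = "basis n"
  have "complex_of_real (\<Sum>w\<in>?B. (cmod (\<Sum>z\<in>?B. pauli_entry n x w z * \<psi> z))\<^sup>2)
      = (\<Sum>w\<in>?B. \<Sum>z\<in>?B. \<Sum>z'\<in>?B. \<psi> z * cnj (\<psi> z') * (pauli_entry n x w z * cnj (pauli_entry n x w z')))"
    by (simp only: of_real_sum complex_norm_square cnj_sum sum_product) (simp add: mult_ac)
  also have "\<dots> = (\<Sum>z\<in>?B. \<Sum>z'\<in>?B. \<psi> z * cnj (\<psi> z') * (\<Sum>w\<in>?B. pauli_entry n x w z * cnj (pauli_entry n x w z')))"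
    unfolding sum_distrib_left by (subst sum.swap) (rule sum.cong[OF refl], rule sum.swap)
  also have "\<dots> = (\<Sum>z\<in>?B. \<Sum>z'\<in>?B. \<psi> z * cnj (\<psi> z') * (if z = z' then 1 else 0))"
    by (intro sum.cong refl) (simp add: pauli_entry_unitary)
  also have "\<dots> = (\<Sum>z\<in>?B. \<psi> z * cnj (\<psi> z))"
    by (simp add: if_distrib[of "\<lambda>t. _ * t"] cong: if_cong)
  also have "\<dots> = 1"
    by (rule pure_state_sum_mult_cnj[OF assms])
  finally show ?thesis
    by (simp only: of_real_eq_1_iff)
qed

lemma abs_alpha_le_1:
  assumes "pure_state n \<psi>"
  shows "\<bar>alpha n \<psi> x\<bar> \<le> 1"
proof -
  let ?B = "basis n"
  define y where "y w = (\<Sum>z\<in>?B. pauli_entry n x w z * \<psi> z)" for w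
  have "pauli_expval n \<psi> x = (\<Sum>w\<in>?B. cnj (\<psi> w) * y w)"
    by (simp add: pauli_expval_def y_def sum_distrib_left mult.assoc)
  then have "\<bar>alpha n \<psi> x\<bar> = cmod (\<Sum>w\<in>?B. cnj (\<psi> w) * y w)"
    by (metis norm_of_real of_real_alpha)
  also have "\<dots> \<le> (\<Sum>w\<in>?B. cmod (\<psi> w) * cmod (y w))"
    using norm_sum[of "\<lambda>w. cnj (\<psi> w) * y w"] by (simp add: norm_mult)
  also have "\<dots> \<le> L2_set (\<lambda>w. cmod (\<psi> w)) ?B * L2_set (\<lambda>w. cmod (y w)) ?B"
    using L2_set_mult_ineq[of "\<lambda>w. cmod (\<psi> w)" "\<lambda>w. cmod (y w)" ?B] by simp
  also have "\<dots> = 1"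
    using assms norm_pauli_apply[OF assms, of x] by (simp add: L2_set_def pure_state_def y_def)
  finally show ?thesis .
qed

section \<open>The function G\<close>

lemma G_eq:
  assumes "u \<noteq> 0 \<or> v \<noteq> 0"
  shows "G g0 u v = 1/2 + u * v / (u\<^sup>2 + v\<^sup>2)"
proof -
  define S where "S = u\<^sup>2 + v\<^sup>2"
  have "S > 0"
    using assms by (simp add: S_def sum_power2_gt_zero_iff)
  moreover have "(u + v)\<^sup>2 = S + 2 * (u * v)"
    by (simp add: S_def power2_eq_square algebra_simps)
  ultimately show ?thesis
    using assms by (auto simp: G_def S_def[symmetric] add_divide_distrib)
qed

lemma G_bounds:
  assumes "0 \<le> g0" "g0 \<le> 1"
  shows "0 \<le> G g0 u v \<and> G g0 u v \<le> 1"
proof (cases "u = 0 \<and> v = 0")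
  case True
  then show ?thesis using assms by (simp add: G_def)
next
  case False
  then have "u\<^sup>2 + v\<^sup>2 > 0"
    by (simp add: sum_power2_gt_zero_iff)
  moreover have "(u + v)\<^sup>2 \<le> 2 * (u\<^sup>2 + v\<^sup>2)"
    using sum_squares_ge_zero[of "u - v" 0] by (simp add: power2_eq_square algebra_simps)
  ultimately show ?thesis
    using False by (auto simp: G_def divide_le_eq)
qed

text \<open>The two Lagrange identities
  \<open>(u\<^sup>2 + v\<^sup>2)(a\<^sup>2 + b\<^sup>2) = (v b - u a)\<^sup>2 + (u b + v a)\<^sup>2\<close> and
  \<open>(u\<^sup>2 + v\<^sup>2)((u - a)\<^sup>2 + (v - b)\<^sup>2) = (u b - v a)\<^sup>2 + (u (a - u) + v (b - v))\<^sup>2\<close>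
  bound the two factors of \<open>G u v - G a b = (u b - v a)(v b - u a) / ((u\<^sup>2 + v\<^sup>2)(a\<^sup>2 + b\<^sup>2))\<close>.\<close>

lemma G_diff_squared_le:
  assumes uv: "u \<noteq> 0 \<or> v \<noteq> 0" and ab: "a \<noteq> 0 \<or> b \<noteq> 0"
  shows "(G g0 u v - G g0 a b)\<^sup>2 \<le> ((u - a)\<^sup>2 + (v - b)\<^sup>2) / (a\<^sup>2 + b\<^sup>2)"
proof -
  define S R D where "S = u\<^sup>2 + v\<^sup>2" and "R = a\<^sup>2 + b\<^sup>2" and "D = (u - a)\<^sup>2 + (v - b)\<^sup>2"
  define c k where "c = u * b - v * a" and "k = v * b - u * a"
  have pos: "S > 0" "R > 0"
    using uv ab by (simp_all add: S_def R_def sum_power2_gt_zero_iff)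
  have "G g0 u v - G g0 a b = u * v / S - a * b / R"
    by (simp add: G_eq[OF uv] G_eq[OF ab] S_def R_def)
  also have "\<dots> = (u * v * R - a * b * S) / (S * R)"
    using pos by (simp add: field_simps)
  also have "u * v * R - a * b * S = c * k"
    by (simp add: S_def R_def c_def k_def power2_eq_square algebra_simps)
  finally have diff: "G g0 u v - G g0 a b = c * k / (S * R)" .
  have "S * R = k\<^sup>2 + (u * b + v * a)\<^sup>2" "S * D = c\<^sup>2 + (u * (a - u) + v * (b - v))\<^sup>2"
    by (simp_all add: S_def R_def D_def c_def k_def power2_eq_square algebra_simps)
  then have "c\<^sup>2 * k\<^sup>2 \<le> (S * D) * (S * R)"
    by (intro mult_mono) auto
  then have "(c * k / (S * R))\<^sup>2 \<le> (S * D) * (S * R) / (S * R)\<^sup>2"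
    using pos by (simp add: power_divide power_mult_distrib divide_right_mono)
  also have "\<dots> = D / R"
    using pos by (simp add: power2_eq_square field_simps)
  finally show ?thesis
    by (simp add: diff D_def R_def)
qed

lemma abs_G_diff_le:
  assumes g0: "0 \<le> g0" "g0 \<le> 1" and e: "e > 0"
    and u: "\<bar>u - a\<bar> \<le> e" and v: "\<bar>v - b\<bar> \<le> e" and ab: "e \<le> a\<^sup>2 + b\<^sup>2"
  shows "\<bar>G g0 u v - G g0 a b\<bar> \<le> 2 * sqrt e"
proof -
  have close: "(u - a)\<^sup>2 \<le> e\<^sup>2" "(v - b)\<^sup>2 \<le> e\<^sup>2"
    using u v by (simp_all add: abs_le_square_iff[symmetric] power2_abs)
  have sq: "(2 * sqrt e)\<^sup>2 = 4 * e"
    using e by (simp add: power_mult_distrib)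
  have "(G g0 u v - G g0 a b)\<^sup>2 \<le> (2 * sqrt e)\<^sup>2"
  proof (cases "u = 0 \<and> v = 0")
    case True
    \<comment> \<open>then \<open>e \<le> a\<^sup>2 + b\<^sup>2 \<le> 2 e\<^sup>2\<close>, so \<open>e \<ge> 1/2\<close> and the trivial bound \<open>1\<close> suffices\<close>
    then have "e * 1 \<le> e * (2 * e)"
      using close ab by (simp add: power2_eq_square)
    then have "1 \<le> 2 * e"
      using e by (simp only: mult_le_cancel_left_pos)
    moreover have "\<bar>G g0 u v - G g0 a b\<bar> \<le> 1"
      using G_bounds[OF g0, of u v] G_bounds[OF g0, of a b] by linarith
    ultimately show ?thesis
      unfolding sq abs_square_le_1[symmetric] by linarith
  next
    case False
    have ab0: "a \<noteq> 0 \<or> b \<noteq> 0"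
      using ab e by auto
    have "(G g0 u v - G g0 a b)\<^sup>2 \<le> ((u - a)\<^sup>2 + (v - b)\<^sup>2) / (a\<^sup>2 + b\<^sup>2)"
      using False ab0 by (intro G_diff_squared_le) auto
    also have "\<dots> \<le> (2 * e\<^sup>2) / e"
      using close ab e by (intro frac_le) simp_all
    also have "\<dots> \<le> (2 * sqrt e)\<^sup>2"
      unfolding sq using e by (simp add: power2_eq_square)
    finally show ?thesis .
  qed
  then show ?thesis
    using abs_le_square_iff[of "G g0 u v - G g0 a b" "2 * sqrt e"] e by simp
qed

lemma sum_p_mix:
  assumes "pure_state n \<psi>" "pure_state n \<phi>"
  shows "(\<Sum>x\<in>pauli_labels n. p_mix n \<psi> \<phi> x) = 1"
  using sum_alpha_squared[OF assms(1)] sum_alpha_squared[OF assms(2)]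
  by (simp add: p_mix_def pauli_dist_def sum.distrib flip: sum_divide_distrib)

lemma p_mix_mult_G:
  "p_mix n \<psi> \<phi> x * G g0 (alpha n \<psi> x) (alpha n \<phi> x) = (alpha n \<psi> x + alpha n \<phi> x)\<^sup>2 / (4 * 2 ^ n)"
proof (cases "alpha n \<psi> x = 0 \<and> alpha n \<phi> x = 0")
  case True
  then show ?thesis by (simp add: p_mix_def pauli_dist_def)
next
  case False
  define S where "S = (alpha n \<psi> x)\<^sup>2 + (alpha n \<phi> x)\<^sup>2"
  have "S > 0"
    using False by (simp add: S_def sum_power2_gt_zero_iff)
  have p: "p_mix n \<psi> \<phi> x = S / (2 * 2 ^ n)"
    by (simp add: p_mix_def pauli_dist_def S_def add_divide_distrib)
  have g: "G g0 (alpha n \<psi> x) (alpha n \<phi> x) = (alpha n \<psi> x + alpha n \<phi> x)\<^sup>2 / (2 * S)"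
    using False by (auto simp: G_def S_def)
  show ?thesis
    unfolding p g using \<open>S > 0\<close> by (simp add: field_simps)
qed

lemma sum_p_mix_mult_G:
  assumes "pure_state n \<psi>" "pure_state n \<phi>"
  shows "(\<Sum>x\<in>pauli_labels n. p_mix n \<psi> \<phi> x * G g0 (alpha n \<psi> x) (alpha n \<phi> x)) = (1 + overlap n \<psi> \<phi>) / 2"
proof -
  have "(\<Sum>x\<in>pauli_labels n. (alpha n \<psi> x + alpha n \<phi> x)\<^sup>2)
      = (\<Sum>x\<in>pauli_labels n. (alpha n \<psi> x)\<^sup>2) + (\<Sum>x\<in>pauli_labels n. (alpha n \<phi> x)\<^sup>2)
        + 2 * (\<Sum>x\<in>pauli_labels n. alpha n \<psi> x * alpha n \<phi> x)"
    by (simp add: power2_sum sum.distrib sum_distrib_left mult.assoc)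
  also have "\<dots> = 2 * 2 ^ n * (1 + overlap n \<psi> \<phi>)"
    by (simp add: sum_alpha_squared[OF assms(1)] sum_alpha_squared[OF assms(2)] sum_alpha_mult_alpha
        distrib_left)
  finally show ?thesis
    by (simp add: p_mix_mult_G flip: sum_divide_distrib)
qed

definition weak_label ::
  "nat \<Rightarrow> (bool list \<Rightarrow> complex) \<Rightarrow> (bool list \<Rightarrow> complex) \<Rightarrow> real \<Rightarrow> bool list \<times> bool list \<Rightarrow> bool" where
  "weak_label n \<psi> \<phi> \<tau> x \<longleftrightarrow> (alpha n \<psi> x)\<^sup>2 < \<tau> \<and> (alpha n \<phi> x)\<^sup>2 < \<tau>"

lemma sum_p_mix_weak_label_le:
  "(\<Sum>x\<in>pauli_labels n. p_mix n \<psi> \<phi> x * of_bool (weak_label n \<psi> \<phi> \<tau> x)) \<le> cdf n \<psi> \<tau> / 2 + cdf n \<phi> \<tau> / 2"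
proof -
  have "(\<Sum>x\<in>pauli_labels n. p_mix n \<psi> \<phi> x * of_bool (weak_label n \<psi> \<phi> \<tau> x))
     \<le> (\<Sum>x\<in>pauli_labels n. (if (alpha n \<psi> x)\<^sup>2 < \<tau> then pauli_dist n \<psi> x else 0) / 2
                              + (if (alpha n \<phi> x)\<^sup>2 < \<tau> then pauli_dist n \<phi> x else 0) / 2)"
    by (intro sum_mono) (auto simp: weak_label_def p_mix_def pauli_dist_def)
  also have "\<dots> = cdf n \<psi> \<tau> / 2 + cdf n \<phi> \<tau> / 2"
    by (simp add: cdf_def sum.distrib sum.inter_filter flip: sum_divide_distrib)
  finally show ?thesis .
qed

text \<open>Centering \<open>h\<close> at \<open>1/2\<close> costs nothing because both weight functions have total mass \<open>1\<close>.\<close>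

lemma abs_expectation_diff_le_tv_dist:
  assumes supp: "set_pmf q \<subseteq> pauli_labels n"
    and p: "(\<Sum>x\<in>pauli_labels n. p x) = 1"
    and h: "\<And>x. x \<in> pauli_labels n \<Longrightarrow> 0 \<le> h x \<and> h x \<le> 1"
  shows "\<bar>measure_pmf.expectation q h - (\<Sum>x\<in>pauli_labels n. p x * h x)\<bar> \<le> tv_dist n p q"
proof -
  let ?L = "pauli_labels n"
  have q: "(\<Sum>x\<in>?L. pmf q x) = 1"
    using sum_pmf_eq_1[OF finite_pauli_labels supp] .
  have "measure_pmf.expectation q h = (\<Sum>x\<in>?L. pmf q x * h x)"
    using supp by (subst integral_measure_pmf_real[of ?L]) (auto simp: mult.commute)
  also have "\<dots> = (\<Sum>x\<in>?L. p x * h x) + (\<Sum>x\<in>?L. (pmf q x - p x) * (h x - 1/2))"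
    using p q by (simp add: algebra_simps sum.distrib sum_subtractf flip: sum_distrib_right sum_divide_distrib)
  finally have "\<bar>measure_pmf.expectation q h - (\<Sum>x\<in>?L. p x * h x)\<bar>
      = \<bar>\<Sum>x\<in>?L. (pmf q x - p x) * (h x - 1/2)\<bar>"
    by simp
  also have "\<dots> \<le> (\<Sum>x\<in>?L. \<bar>p x - pmf q x\<bar> / 2)"
  proof (rule order.trans[OF sum_abs sum_mono])
    fix x
    assume "x \<in> ?L"
    then have "0 \<le> h x \<and> h x \<le> 1"
      by (rule h)
    then have "\<bar>h x - 1/2\<bar> \<le> 1/2"
      unfolding abs_le_iff by linarith
    then have "\<bar>p x - pmf q x\<bar> * \<bar>h x - 1/2\<bar> \<le> \<bar>p x - pmf q x\<bar> * (1/2)"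
      by (intro mult_left_mono) auto
    then show "\<bar>(pmf q x - p x) * (h x - 1/2)\<bar> \<le> \<bar>p x - pmf q x\<bar> / 2"
      by (simp add: abs_mult abs_minus_commute)
  qed
  also have "\<dots> = tv_dist n p q"
    by (simp add: tv_dist_def sum_divide_distrib)
  finally show ?thesis .
qed

section \<open>Concentration\<close>

lemma measure_pmf_bind_le:
  assumes "\<And>x. x \<in> set_pmf p \<Longrightarrow> measure_pmf.prob (f x) A \<le> c"
  shows "measure_pmf.prob (bind_pmf p f) A \<le> c"
proof -
  obtain x0 where "x0 \<in> set_pmf p"
    using set_pmf_not_empty[of p] by blast
  then have "c \<ge> 0"
    using assms[of x0] measure_nonneg[of "measure_pmf (f x0)" A] by linarith
  have "ennreal (measure_pmf.prob (bind_pmf p f) A) = (\<integral>\<^sup>+x. emeasure (measure_pmf (f x)) A \<partial>measure_pmf p)"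
    by (simp add: measure_pmf.emeasure_eq_measure[symmetric])
  also have "\<dots> \<le> (\<integral>\<^sup>+x. ennreal c \<partial>measure_pmf p)"
    using assms by (intro nn_integral_mono_AE)
      (auto simp: AE_measure_pmf_iff measure_pmf.emeasure_eq_measure intro: ennreal_leI)
  also have "\<dots> = ennreal c"
    by simp
  finally show ?thesis
    using \<open>c \<ge> 0\<close> by (simp add: ennreal_le_iff)
qed

lemma prob_Pi_pmf_component:
  assumes "i \<in> I" "finite I"
  shows "measure_pmf.prob (Pi_pmf I d (\<lambda>_. p)) {\<omega>. \<omega> i \<in> S} = measure_pmf.prob p S"
proof -
  have "measure_pmf.prob (Pi_pmf I d (\<lambda>_. p)) {\<omega>. \<omega> i \<in> S}
      = measure_pmf.prob (map_pmf (\<lambda>\<omega>. \<omega> i) (Pi_pmf I d (\<lambda>_. p))) S"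
    by (simp add: vimage_def)
  then show ?thesis
    using assms by (simp add: Pi_pmf_component)
qed

lemma Hoeffding_ineq_abs_ge_Pi_pmf:
  fixes g :: "'a \<Rightarrow> real"
  assumes N: "N > 0" and ab: "a < b" and range: "\<And>x. x \<in> set_pmf p \<Longrightarrow> g x \<in> {a..b}"
    and \<epsilon>: "\<epsilon> \<ge> 0"
  shows "measure_pmf.prob (Pi_pmf {..<N} d (\<lambda>_. p))
           {\<omega>. \<epsilon> \<le> \<bar>(\<Sum>i<N. g (\<omega> i)) / real N - measure_pmf.expectation p g\<bar>}
         \<le> 2 * exp (- (2 * real N * \<epsilon>\<^sup>2 / (b - a)\<^sup>2))"
proof -
  define M where "M = Pi_pmf {..<N} d (\<lambda>_. p)"
  have component: "map_pmf (\<lambda>\<omega>. \<omega> i) M = p" if "i < N" for i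
    using that by (simp add: M_def Pi_pmf_component)
  have distr: "distr (measure_pmf M) borel (\<lambda>\<omega>. g (\<omega> i)) = distr (measure_pmf p) borel g" if "i < N" for i
  proof -
    have "distr (measure_pmf M) borel (\<lambda>\<omega>. g (\<omega> i)) = distr (measure_pmf (map_pmf (\<lambda>\<omega>. \<omega> i) M)) borel g"
      unfolding map_pmf_rep_eq by (subst distr_distr) (auto simp: o_def)
    then show ?thesis
      using component[OF that] by simp
  qed
  have expectation: "measure_pmf.expectation M (\<lambda>\<omega>. g (\<omega> 0)) = measure_pmf.expectation p g"
    using component[of 0] N by (metis integral_map_pmf)
  interpret Hoeffding_ineq_iid M "{..<N}" "\<lambda>i \<omega>. g (\<omega> i)" "\<lambda>\<omega>. g (\<omega> 0)" a b
    "measure_pmf.expectation M (\<lambda>\<omega>. g (\<omega> 0))"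
  proof unfold_locales
    show "prob_space.indep_vars (measure_pmf M) (\<lambda>_. borel) (\<lambda>i \<omega>. g (\<omega> i)) {..<N}"
      unfolding M_def
      by (intro prob_space.indep_vars_compose2[OF _ indep_vars_Pi_pmf])
        (auto simp: measure_pmf.prob_space_axioms)
    show "AE \<omega> in measure_pmf M. g (\<omega> 0) \<in> {a..b}"
      using component[of 0] N range by (auto simp: AE_measure_pmf_iff)
  qed (auto simp: distr)
  have "{..<N} \<noteq> {}"
    using N by auto
  then show ?thesis
    using Hoeffding_ineq_abs_ge'[OF \<epsilon> ab] by (simp add: M_def[symmetric] expectation)
qed

lemma prob_emp_mean_deviation_le:
  assumes "\<bar>a\<bar> \<le> 1" "N > 0" "\<epsilon> \<ge> 0"
  shows "measure_pmf.prob (Pi_pmf {..<N} False (\<lambda>_. bernoulli_pmf ((1 + a) / 2)))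
           {r. \<epsilon> \<le> \<bar>emp_mean N r - a\<bar>} \<le> 2 * exp (- (1/2 * real N * \<epsilon>\<^sup>2))"
proof -
  let ?p = "bernoulli_pmf ((1 + a) / 2)" and ?sign = "\<lambda>b. if b then 1 else -1 :: real"
  have "measure_pmf.expectation ?p ?sign = a"
    using assms(1) by (simp add: field_simps)
  moreover have "measure_pmf.prob (Pi_pmf {..<N} False (\<lambda>_. ?p))
      {r. \<epsilon> \<le> \<bar>emp_mean N r - measure_pmf.expectation ?p ?sign\<bar>} \<le> 2 * exp (- (2 * real N * \<epsilon>\<^sup>2 / (1 - (-1))\<^sup>2))"
    unfolding emp_mean_def using assms(2,3)
    by (intro Hoeffding_ineq_abs_ge_Pi_pmf[where g = ?sign]) auto
  ultimately show ?thesis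
    by (simp add: power2_eq_square mult_ac)
qed

section \<open>The symmetric protocol\<close>

type_synonym round_data = "(bool list \<times> bool list) \<times> (nat \<Rightarrow> bool) \<times> (nat \<Rightarrow> bool)"

definition outcomes_pmf ::
  "nat \<Rightarrow> (bool list \<Rightarrow> complex) \<Rightarrow> nat \<Rightarrow> bool list \<times> bool list \<Rightarrow> (nat \<Rightarrow> bool) pmf" where
  "outcomes_pmf n \<psi> N x = Pi_pmf {..<N} False (\<lambda>_. measure_outcome n \<psi> x)"

definition round_pmf ::
  "nat \<Rightarrow> (bool list \<Rightarrow> complex) \<Rightarrow> (bool list \<Rightarrow> complex) \<Rightarrow> (bool list \<times> bool list) pmf \<Rightarrow> nat
   \<Rightarrow> round_data pmf" where
  "round_pmf n \<psi> \<phi> pt N =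
     do { x \<leftarrow> pt; r \<leftarrow> outcomes_pmf n \<psi> N x; s \<leftarrow> outcomes_pmf n \<phi> N x; return_pmf (x, r, s) }"

lemma protocol_pmf_eq_Pi_pmf:
  "protocol_pmf n \<psi> \<phi> pt N1 N2 = Pi_pmf {..<N1} undefined (\<lambda>_. round_pmf n \<psi> \<phi> pt N2)"
  by (simp add: protocol_pmf_def round_pmf_def outcomes_pmf_def)

lemma map_fst_round_pmf: "map_pmf fst (round_pmf n \<psi> \<phi> pt N) = pt"
  by (simp add: round_pmf_def map_bind_pmf bind_return_pmf')

lemma map_round_pmf_first_outcomes:
  "map_pmf (\<lambda>y. (fst y, fst (snd y))) (round_pmf n \<psi> \<phi> pt N) = pt \<bind> (\<lambda>x. map_pmf (Pair x) (outcomes_pmf n \<psi> N x))"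
  unfolding round_pmf_def map_bind_pmf by (simp add: map_pmf_def bind_return_pmf)

lemma map_round_pmf_second_outcomes:
  "map_pmf (\<lambda>y. (fst y, snd (snd y))) (round_pmf n \<psi> \<phi> pt N) = pt \<bind> (\<lambda>x. map_pmf (Pair x) (outcomes_pmf n \<phi> N x))"
  unfolding round_pmf_def map_bind_pmf by (simp add: map_pmf_def bind_return_pmf)

lemma prob_outcomes_deviation_le:
  assumes "pure_state n \<psi>" "N > 0" "\<epsilon> \<ge> 0"
  shows "measure_pmf.prob (pt \<bind> (\<lambda>x. map_pmf (Pair x) (outcomes_pmf n \<psi> N x)))
           {(x, r). \<epsilon> < \<bar>emp_mean N r - alpha n \<psi> x\<bar>} \<le> 2 * exp (- (1/2 * real N * \<epsilon>\<^sup>2))"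
proof (rule measure_pmf_bind_le)
  fix x
  have "measure_pmf.prob (map_pmf (Pair x) (outcomes_pmf n \<psi> N x)) {(x, r). \<epsilon> < \<bar>emp_mean N r - alpha n \<psi> x\<bar>}
      \<le> measure_pmf.prob (outcomes_pmf n \<psi> N x) {r. \<epsilon> \<le> \<bar>emp_mean N r - alpha n \<psi> x\<bar>}"
    by (auto simp: vimage_def intro!: measure_pmf.finite_measure_mono)
  also have "\<dots> \<le> 2 * exp (- (1/2 * real N * \<epsilon>\<^sup>2))"
    unfolding outcomes_pmf_def measure_outcome_def
    using abs_alpha_le_1[OF assms(1)] assms(2,3) by (rule prob_emp_mean_deviation_le)
  finally show "measure_pmf.prob (map_pmf (Pair x) (outcomes_pmf n \<psi> N x))
      {(x, r). \<epsilon> < \<bar>emp_mean N r - alpha n \<psi> x\<bar>} \<le> 2 * exp (- (1/2 * real N * \<epsilon>\<^sup>2))" .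
qed

definition accurate_rounds ::
  "nat \<Rightarrow> (bool list \<Rightarrow> complex) \<Rightarrow> (bool list \<Rightarrow> complex) \<Rightarrow> nat \<Rightarrow> nat \<Rightarrow> real
   \<Rightarrow> (nat \<Rightarrow> round_data) \<Rightarrow> bool" where
  "accurate_rounds n \<psi> \<phi> N1 N2 \<epsilon> \<omega> \<longleftrightarrow>
     (\<forall>i<N1. \<bar>emp_mean N2 (fst (snd (\<omega> i))) - alpha n \<psi> (fst (\<omega> i))\<bar> \<le> \<epsilon>
           \<and> \<bar>emp_mean N2 (snd (snd (\<omega> i))) - alpha n \<phi> (fst (\<omega> i))\<bar> \<le> \<epsilon>)"

lemma prob_not_accurate_rounds_le:
  assumes "pure_state n \<psi>" "pure_state n \<phi>" "N2 > 0" "\<epsilon> \<ge> 0"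
  shows "measure_pmf.prob (protocol_pmf n \<psi> \<phi> pt N1 N2) {\<omega>. \<not> accurate_rounds n \<psi> \<phi> N1 N2 \<epsilon> \<omega>}
         \<le> 4 * real N1 * exp (- (1/2 * real N2 * \<epsilon>\<^sup>2))"
proof -
  let ?\<Omega> = "protocol_pmf n \<psi> \<phi> pt N1 N2" and ?b = "2 * exp (- (1/2 * real N2 * \<epsilon>\<^sup>2))"
  define A where "A i = {\<omega> :: nat \<Rightarrow> round_data.
    \<omega> i \<in> (\<lambda>y. (fst y, fst (snd y))) -` {(x, r). \<epsilon> < \<bar>emp_mean N2 r - alpha n \<psi> x\<bar>}}" for i
  define B where "B i = {\<omega> :: nat \<Rightarrow> round_data.
    \<omega> i \<in> (\<lambda>y. (fst y, snd (snd y))) -` {(x, s). \<epsilon> < \<bar>emp_mean N2 s - alpha n \<phi> x\<bar>}}" for i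
  have component: "measure_pmf.prob ?\<Omega> {\<omega>. \<omega> i \<in> f -` S} \<le> ?b"
    if "measure_pmf.prob (map_pmf f (round_pmf n \<psi> \<phi> pt N2)) S \<le> ?b" "i < N1"
    for f :: "round_data \<Rightarrow> _" and S i
    using that unfolding protocol_pmf_eq_Pi_pmf by (subst prob_Pi_pmf_component) auto
  have AB: "measure_pmf.prob ?\<Omega> (A i) \<le> ?b" "measure_pmf.prob ?\<Omega> (B i) \<le> ?b" if "i < N1" for i
    unfolding A_def B_def
    using that prob_outcomes_deviation_le[OF assms(1,3,4)] prob_outcomes_deviation_le[OF assms(2,3,4)]
    by (simp_all only: component map_round_pmf_first_outcomes map_round_pmf_second_outcomes)
  have "{\<omega>. \<not> accurate_rounds n \<psi> \<phi> N1 N2 \<epsilon> \<omega>} = (\<Union>i<N1. A i \<union> B i)"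
    by (auto simp: accurate_rounds_def A_def B_def not_le)
  then have "measure_pmf.prob ?\<Omega> {\<omega>. \<not> accurate_rounds n \<psi> \<phi> N1 N2 \<epsilon> \<omega>}
      \<le> (\<Sum>i<N1. measure_pmf.prob ?\<Omega> (A i \<union> B i))"
    by (simp add: measure_pmf.finite_measure_subadditive_finite)
  also have "\<dots> \<le> (\<Sum>i<N1. ?b + ?b)"
    using AB by (intro sum_mono order.trans[OF measure_Un_le add_mono]) auto
  finally show ?thesis
    by simp
qed

definition label_mean :: "nat \<Rightarrow> (bool list \<times> bool list \<Rightarrow> real) \<Rightarrow> (nat \<Rightarrow> round_data) \<Rightarrow> real" where
  "label_mean N h \<omega> = (\<Sum>i<N. h (fst (\<omega> i))) / real N"

lemma prob_label_mean_deviation_le: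
  assumes "N1 > 0" "\<epsilon> \<ge> 0" and h: "\<And>x. 0 \<le> h x \<and> h x \<le> 1"
  shows "measure_pmf.prob (protocol_pmf n \<psi> \<phi> pt N1 N2)
           {\<omega>. \<epsilon> \<le> \<bar>label_mean N1 h \<omega> - measure_pmf.expectation pt h\<bar>}
         \<le> 2 * exp (- (2 * real N1 * \<epsilon>\<^sup>2))"
proof -
  have "measure_pmf.expectation pt h = measure_pmf.expectation (round_pmf n \<psi> \<phi> pt N2) (\<lambda>y. h (fst y))"
    by (metis integral_map_pmf map_fst_round_pmf)
  then show ?thesis
    using Hoeffding_ineq_abs_ge_Pi_pmf[of N1 0 1 "round_pmf n \<psi> \<phi> pt N2" "\<lambda>y. h (fst y)" \<epsilon> undefined] assms
    by (simp add: protocol_pmf_eq_Pi_pmf label_mean_def)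
qed

lemma abs_mean_diff_le:
  fixes a b c :: "nat \<Rightarrow> real"
  assumes "N > 0" and "\<And>i. i < N \<Longrightarrow> \<bar>a i - b i\<bar> \<le> c i + K"
  shows "\<bar>(\<Sum>i<N. a i) / N - (\<Sum>i<N. b i) / N\<bar> \<le> (\<Sum>i<N. c i) / N + K"
proof -
  have "\<bar>(\<Sum>i<N. a i) - (\<Sum>i<N. b i)\<bar> \<le> (\<Sum>i<N. \<bar>a i - b i\<bar>)"
    by (metis sum_abs sum_subtractf)
  also have "\<dots> \<le> (\<Sum>i<N. c i) + N * K"
    using assms(2) sum_mono[of "{..<N}" "\<lambda>i. \<bar>a i - b i\<bar>" "\<lambda>i. c i + K"] by (simp add: sum.distrib)
  finally show ?thesis
    using assms(1) by (simp add: field_simps flip: diff_divide_distrib)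
qed

lemma estimator_deviation_le:
  assumes g0: "0 \<le> g0" "g0 \<le> 1" and "\<epsilon> > 0" "N1 > 0"
    and accurate: "accurate_rounds n \<psi> \<phi> N1 N2 \<epsilon> \<omega>"
  shows "\<bar>estimator g0 N1 N2 \<omega> - label_mean N1 (\<lambda>x. G g0 (alpha n \<psi> x) (alpha n \<phi> x)) \<omega>\<bar>
         \<le> label_mean N1 (\<lambda>x. of_bool (weak_label n \<psi> \<phi> \<epsilon> x)) \<omega> + 2 * sqrt \<epsilon>"
  unfolding estimator_def label_mean_def
proof (rule abs_mean_diff_le[OF \<open>N1 > 0\<close>])
  fix i
  assume "i < N1"
  define x u v where "x = fst (\<omega> i)"
    and "u = emp_mean N2 (fst (snd (\<omega> i)))" and "v = emp_mean N2 (snd (snd (\<omega> i)))"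
  show "\<bar>G g0 u v - G g0 (alpha n \<psi> x) (alpha n \<phi> x)\<bar> \<le> of_bool (weak_label n \<psi> \<phi> \<epsilon> x) + 2 * sqrt \<epsilon>"
  proof (cases "weak_label n \<psi> \<phi> \<epsilon> x")
    case True
    then have "of_bool (weak_label n \<psi> \<phi> \<epsilon> x) = (1 :: real)"
      by simp
    moreover have "0 \<le> sqrt \<epsilon>"
      using \<open>\<epsilon> > 0\<close> by simp
    ultimately show ?thesis
      using G_bounds[OF g0, of u v] G_bounds[OF g0, of "alpha n \<psi> x" "alpha n \<phi> x"]
      unfolding abs_le_iff by linarith
  next
    case False
    then have "\<epsilon> \<le> (alpha n \<psi> x)\<^sup>2 + (alpha n \<phi> x)\<^sup>2"
      by (auto simp: weak_label_def not_less intro: add_increasing add_increasing2)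
    moreover have "\<bar>u - alpha n \<psi> x\<bar> \<le> \<epsilon>" "\<bar>v - alpha n \<phi> x\<bar> \<le> \<epsilon>"
      using accurate \<open>i < N1\<close> by (simp_all add: accurate_rounds_def x_def u_def v_def)
    ultimately show ?thesis
      using False abs_G_diff_le[OF g0 \<open>\<epsilon> > 0\<close>] by simp
  qed
qed

lemma estimator_error_le:
  fixes \<omega> :: "nat \<Rightarrow> round_data"
  assumes \<psi>: "pure_state n \<psi>" and \<phi>: "pure_state n \<phi>" and g0: "0 \<le> g0" "g0 \<le> 1"
    and "\<epsilon>2 > 0" "N1 > 0" and supp: "set_pmf pt \<subseteq> pauli_labels n"
    and accurate: "accurate_rounds n \<psi> \<phi> N1 N2 \<epsilon>2 \<omega>"
  defines "Gx \<equiv> \<lambda>x. G g0 (alpha n \<psi> x) (alpha n \<phi> x)" and "W \<equiv> \<lambda>x. of_bool (weak_label n \<psi> \<phi> \<epsilon>2 x)"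
  assumes G_mean: "\<bar>label_mean N1 Gx \<omega> - measure_pmf.expectation pt Gx\<bar> < \<epsilon>1"
    and W_mean: "\<bar>label_mean N1 W \<omega> - measure_pmf.expectation pt W\<bar> < \<epsilon>1"
  shows "\<bar>estimator g0 N1 N2 \<omega> - (1 + overlap n \<psi> \<phi>) / 2\<bar>
         \<le> 2 * \<epsilon>1 + 2 * sqrt \<epsilon>2 + cdf n \<psi> \<epsilon>2 / 2 + cdf n \<phi> \<epsilon>2 / 2 + 2 * tv_dist n (p_mix n \<psi> \<phi>) pt"
proof -
  have "\<bar>estimator g0 N1 N2 \<omega> - label_mean N1 Gx \<omega>\<bar> \<le> label_mean N1 W \<omega> + 2 * sqrt \<epsilon>2"
    unfolding Gx_def W_def using estimator_deviation_le[OF g0 assms(5,6) accurate] .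
  moreover have "\<bar>measure_pmf.expectation pt Gx - (1 + overlap n \<psi> \<phi>) / 2\<bar> \<le> tv_dist n (p_mix n \<psi> \<phi>) pt"
    using abs_expectation_diff_le_tv_dist[OF supp sum_p_mix[OF \<psi> \<phi>], of Gx] G_bounds[OF g0]
    by (simp add: Gx_def sum_p_mix_mult_G[OF \<psi> \<phi>])
  moreover have "measure_pmf.expectation pt W \<le> cdf n \<psi> \<epsilon>2 / 2 + cdf n \<phi> \<epsilon>2 / 2 + tv_dist n (p_mix n \<psi> \<phi>) pt"
    using abs_expectation_diff_le_tv_dist[OF supp sum_p_mix[OF \<psi> \<phi>], of W]
      sum_p_mix_weak_label_le[of n \<psi> \<phi> \<epsilon>2] by (simp add: W_def abs_le_iff)
  ultimately show ?thesis
    using G_mean W_mean by (simp add: abs_le_iff abs_less_iff)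
qed

lemma sample_size_exp_le:
  assumes "0 < \<delta>" "\<delta> < 1" "1 \<le> c" "0 < a" "0 < \<epsilon>" and N: "ln (c / \<delta>) / (a * \<epsilon>\<^sup>2) \<le> real N"
  shows "0 < N" and "exp (- (a * real N * \<epsilon>\<^sup>2)) \<le> \<delta> / c"
proof -
  have "0 < ln (c / \<delta>)"
    using assms by (simp add: ln_gt_zero_iff less_divide_eq_1_pos)
  then have "0 < ln (c / \<delta>) / (a * \<epsilon>\<^sup>2)"
    using assms by simp
  then show "0 < N"
    using N by linarith
  have "ln (c / \<delta>) \<le> a * real N * \<epsilon>\<^sup>2"
    using N assms by (simp add: pos_divide_le_eq mult_ac)
  then have "exp (- (a * real N * \<epsilon>\<^sup>2)) \<le> exp (- ln (c / \<delta>))"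
    by simp
  also have "\<dots> = \<delta> / c"
    using assms by (simp add: exp_minus)
  finally show "exp (- (a * real N * \<epsilon>\<^sup>2)) \<le> \<delta> / c" .
qed

lemma prob_not_accurate_rounds_le_sample_size:
  assumes "pure_state n \<psi>" "pure_state n \<phi>" "0 < \<delta>" "\<delta> < 1" "0 < \<epsilon>" "0 < N1"
    and "real N2 \<ge> (2 / \<epsilon>\<^sup>2) * ln (8 * real N1 / \<delta>)"
  shows "measure_pmf.prob (protocol_pmf n \<psi> \<phi> pt N1 N2) {\<omega>. \<not> accurate_rounds n \<psi> \<phi> N1 N2 \<epsilon> \<omega>} \<le> \<delta> / 2"
proof -
  have "ln (8 * real N1 / \<delta>) / (1/2 * \<epsilon>\<^sup>2) \<le> real N2"
    using assms(7) by (simp add: field_simps)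
  then have "0 < N2" "4 * real N1 * exp (- (1/2 * real N2 * \<epsilon>\<^sup>2)) \<le> \<delta> / 2"
    using sample_size_exp_le[of \<delta> "8 * real N1" "1/2" \<epsilon> N2] assms(3-6)
    by (simp_all add: pos_le_divide_eq mult_ac)
  then show ?thesis
    using prob_not_accurate_rounds_le[OF assms(1,2), of N2 \<epsilon> pt N1] assms(5) by linarith
qed

lemma prob_label_mean_deviation_le_sample_size:
  assumes "0 < \<delta>" "\<delta> < 1" "0 < \<epsilon>" "real N1 \<ge> ln (8 / \<delta>) / (2 * \<epsilon>\<^sup>2)"
    and "\<And>x. 0 \<le> h x \<and> h x \<le> 1"
  shows "measure_pmf.prob (protocol_pmf n \<psi> \<phi> pt N1 N2)
           {\<omega>. \<epsilon> \<le> \<bar>label_mean N1 h \<omega> - measure_pmf.expectation pt h\<bar>} \<le> \<delta> / 4"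
proof -
  have N1: "0 < N1" "exp (- (2 * real N1 * \<epsilon>\<^sup>2)) \<le> \<delta> / 8"
    using sample_size_exp_le[of \<delta> 8 2 \<epsilon> N1] assms(1-4) by simp_all
  have "measure_pmf.prob (protocol_pmf n \<psi> \<phi> pt N1 N2)
      {\<omega>. \<epsilon> \<le> \<bar>label_mean N1 h \<omega> - measure_pmf.expectation pt h\<bar>} \<le> 2 * exp (- (2 * real N1 * \<epsilon>\<^sup>2))"
    using N1(1) assms(3,5) by (intro prob_label_mean_deviation_le) auto
  then show ?thesis
    using N1(2) by linarith
qed

lemma prob_ge_union_bound:
  assumes "\<And>\<omega>. \<omega> \<notin> A \<Longrightarrow> \<omega> \<notin> B \<Longrightarrow> \<omega> \<notin> C \<Longrightarrow> \<omega> \<in> S"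
  shows "1 - (measure_pmf.prob M A + measure_pmf.prob M B + measure_pmf.prob M C) \<le> measure_pmf.prob M S"
proof -
  have "1 - measure_pmf.prob M S = measure_pmf.prob M (- S)"
    using measure_pmf.prob_compl[of S M] by (simp add: Compl_eq_Diff_UNIV)
  also have "\<dots> \<le> measure_pmf.prob M (A \<union> B \<union> C)"
    using assms by (intro measure_pmf.finite_measure_mono) auto
  also have "\<dots> \<le> measure_pmf.prob M A + measure_pmf.prob M B + measure_pmf.prob M C"
    by (intro order.trans[OF measure_Un_le] add_mono) auto
  finally show ?thesis
    by linarith
qed

theorem theorem14:
  fixes n N1 N2 :: nat and \<psi> \<phi> :: "bool list \<Rightarrow> complex"
    and \<epsilon>1 \<epsilon>2 \<delta> \<Delta> g0 :: real and pt :: "(bool list \<times> bool list) pmf"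
  assumes "pure_state n \<psi>" and "pure_state n \<phi>"
    and "\<epsilon>1 > 0" and "\<epsilon>2 > 0" and "\<delta> > 0"
    and "0 \<le> g0" and "g0 \<le> 1"
    and "set_pmf pt \<subseteq> pauli_labels n"
    and "tv_dist n (p_mix n \<psi> \<phi>) pt < \<Delta>"
    and "real N1 \<ge> ln (8 / \<delta>) / (2 * \<epsilon>1\<^sup>2)"
    and "real N2 \<ge> (2 / \<epsilon>2\<^sup>2) * ln (8 * real N1 / \<delta>)"
  shows "measure_pmf.prob (protocol_pmf n \<psi> \<phi> pt N1 N2)
           {\<omega>. \<bar>estimator g0 N1 N2 \<omega> - (1 + overlap n \<psi> \<phi>) / 2\<bar>
                \<le> 2 * \<epsilon>1 + 2 * sqrt \<epsilon>2 + cdf n \<psi> \<epsilon>2 / 2 + cdf n \<phi> \<epsilon>2 / 2 + 2 * \<Delta>}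
         \<ge> 1 - \<delta>"
proof (cases "\<delta> < 1")
  case False
  then show ?thesis
    by (intro order.trans[OF _ measure_nonneg]) simp
next
  case True
  let ?\<Omega> = "protocol_pmf n \<psi> \<phi> pt N1 N2" and ?Gx = "\<lambda>x. G g0 (alpha n \<psi> x) (alpha n \<phi> x)"
    and ?W = "\<lambda>x. of_bool (weak_label n \<psi> \<phi> \<epsilon>2 x) :: real"
  define deviating where "deviating h = {\<omega>. \<epsilon>1 \<le> \<bar>label_mean N1 h \<omega> - measure_pmf.expectation pt h\<bar>}" for h
  have "0 < N1"
    using sample_size_exp_le(1)[of \<delta> 8 2 \<epsilon>1 N1] True assms(3,5,10) by simp
  have "1 - (measure_pmf.prob ?\<Omega> {\<omega>. \<not> accurate_rounds n \<psi> \<phi> N1 N2 \<epsilon>2 \<omega>}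
      + measure_pmf.prob ?\<Omega> (deviating ?Gx) + measure_pmf.prob ?\<Omega> (deviating ?W))
    \<le> measure_pmf.prob ?\<Omega> {\<omega>. \<bar>estimator g0 N1 N2 \<omega> - (1 + overlap n \<psi> \<phi>) / 2\<bar>
           \<le> 2 * \<epsilon>1 + 2 * sqrt \<epsilon>2 + cdf n \<psi> \<epsilon>2 / 2 + cdf n \<phi> \<epsilon>2 / 2 + 2 * \<Delta>}"
    using estimator_error_le[OF assms(1,2,6,7,4) \<open>0 < N1\<close> assms(8)] assms(9)
    by (intro prob_ge_union_bound) (fastforce simp: deviating_def not_le)
  moreover have "measure_pmf.prob ?\<Omega> {\<omega>. \<not> accurate_rounds n \<psi> \<phi> N1 N2 \<epsilon>2 \<omega>} \<le> \<delta> / 2"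
    using prob_not_accurate_rounds_le_sample_size[OF assms(1,2,5) True assms(4) \<open>0 < N1\<close> assms(11)] .
  moreover have "measure_pmf.prob ?\<Omega> (deviating ?Gx) \<le> \<delta> / 4" "measure_pmf.prob ?\<Omega> (deviating ?W) \<le> \<delta> / 4"
    unfolding deviating_def
    by (rule prob_label_mean_deviation_le_sample_size[OF assms(5) True assms(3,10)],
        simp add: G_bounds[OF assms(6,7)])+
  ultimately show ?thesis
    by linarith
qed

end
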